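(* In the probit setting below, let $\lambda=\sup_{t\in(0,1)}\sup_{\alpha\ne0}\|\Sigma^{-1/2}X^TD(\hat B+t\alpha)X\alpha\|^2/\|\Sigma^{1/2}\alpha\|^2$. Then $\lambda^{1/2}\le\lambda_{\max}(\Sigma^{-1/2}X^TX\Sigma^{-1/2})-\frac{2}{\pi}\min_{1\le j\le2^p}\lambda_{\min}(\Sigma^{-1/2}W(S_j)\Sigma^{-1/2})$.
   Context: Probit setting: covariates $X_1,\dots,X_n\in\mathbb{R}^p$, responses $Y_i\in\{0,1\}$, $X$ the $n\times p$ matrix with rows $X_i^T$; prior $\omega(\beta)\propto\exp\{-\frac12(\beta-v)^TQ(\beta-v)\}$, $Q$ positive definite or zero; posterior density $\propto\prod_i\Phi(X_i^T\beta)^{Y_i}(1-\Phi(X_i^T\beta))^{1-Y_i}\omega(\beta)$ ($\Phi,\phi$ standard normal cdf/pdf), assumed proper; $\Sigma=X^TX+Q$; $\hat B$ the posterior mode. $g(\theta)=\theta\phi(\theta)/\Phi(\theta)+(\phi(\theta)/\Phi(\theta))^2$; $D(\beta)$ is the diagonal $n\times n$ matrix with $i$th entry $1-g(X_i^T\beta)1_{\{1\}}(Y_i)-g(-X_i^T\beta)1_{\{0\}}(Y_i)$. $S_1,\dots,S_{2^p}$ are the open orthants of $\mathbb{R}^p$, and $W(S_j)=\sum_{i:X_i\in S_j}X_i1_{\{0\}}(Y_i)X_i^T+\sum_{i:X_i\in-S_j}X_i1_{\{1\}}(Y_i)X_i^T$. $\lambda_{\max},\lambda_{\min}$ are the largest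 and smallest eigenvalues. *)

theory Defs
  imports "HOL-Probability.Probability"
begin

definition Phi :: "real \<Rightarrow> real" where
  "Phi x = interval_lebesgue_integral lborel (-\<infinity>) (ereal x) std_normal_density"

abbreviation phi :: "real \<Rightarrow> real" where
  "phi \<equiv> std_normal_density"

definition gfun :: "real \<Rightarrow> real" where
  "gfun \<theta> = \<theta> * phi \<theta> / Phi \<theta> + (phi \<theta> / Phi \<theta>)\<^sup>2"

definition diag_mat :: "('n::finite \<Rightarrow> real) \<Rightarrow> real^'n^'n" where
  "diag_mat d = (\<chi> i j. if i = j then d i else 0)"

definition outer :: "real^'m::finite \<Rightarrow> real^'m \<Rightarrow> real^'m^'m" where
  "outer x y = (\<chi> i j. x $ i * y $ j)"

definition sym_mat :: "real^'n::finite^'n \<Rightarrow> bool" where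
  "sym_mat A \<longleftrightarrow> transpose A = A"

definition psd :: "real^'n::finite^'n \<Rightarrow> bool" where
  "psd A \<longleftrightarrow> sym_mat A \<and> (\<forall>x. 0 \<le> x \<bullet> (A *v x))"

definition pd :: "real^'n::finite^'n \<Rightarrow> bool" where
  "pd A \<longleftrightarrow> sym_mat A \<and> (\<forall>x. x \<noteq> 0 \<longrightarrow> 0 < x \<bullet> (A *v x))"

definition mat_sqrt :: "real^'n::finite^'n \<Rightarrow> real^'n^'n" where
  "mat_sqrt A = (THE R. psd R \<and> R ** R = A)"

definition mat_isqrt :: "real^'n::finite^'n \<Rightarrow> real^'n^'n" where
  "mat_isqrt A = matrix_inv (mat_sqrt A)"

definition eigenvalues :: "real^'n::finite^'n \<Rightarrow> real set" where
  "eigenvalues A = {c. \<exists>x. x \<noteq> 0 \<and> A *v x = c *\<^sub>R x}"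

definition lambda_max :: "real^'n::finite^'n \<Rightarrow> real" where
  "lambda_max A = Max (eigenvalues A)"

definition lambda_min :: "real^'n::finite^'n \<Rightarrow> real" where
  "lambda_min A = Min (eigenvalues A)"

text \<open>Open orthant indexed by a sign pattern \<open>s\<close> (True = positive coordinate).\<close>
definition orthant :: "('p::finite \<Rightarrow> bool) \<Rightarrow> (real^'p) set" where
  "orthant s = {x. \<forall>k. if s k then 0 < x $ k else x $ k < 0}"

definition Wmat :: "real^'p::finite^'n::finite \<Rightarrow> ('n \<Rightarrow> nat) \<Rightarrow> (real^'p) set \<Rightarrow> real^'p^'p" where
  "Wmat X Y S =
     (\<Sum>i\<in>{i. X $ i \<in> S}. (if Y i = 0 then 1 else 0) *\<^sub>R outer (X $ i) (X $ i)) +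
     (\<Sum>i\<in>{i. X $ i \<in> uminus ` S}. (if Y i = 1 then 1 else 0) *\<^sub>R outer (X $ i) (X $ i))"

definition Dmat :: "real^'p::finite^'n::finite \<Rightarrow> ('n \<Rightarrow> nat) \<Rightarrow> real^'p \<Rightarrow> real^'n^'n" where
  "Dmat X Y \<beta> = diag_mat (\<lambda>i. 1 - gfun (X $ i \<bullet> \<beta>) * (if Y i = 1 then 1 else 0)
                                 - gfun (- (X $ i \<bullet> \<beta>)) * (if Y i = 0 then 1 else 0))"

definition prior :: "real^'p::finite^'p \<Rightarrow> real^'p \<Rightarrow> real^'p \<Rightarrow> real" where
  "prior Q v \<beta> = exp (- (1/2) * ((\<beta> - v) \<bullet> (Q *v (\<beta> - v))))"

definition post :: "real^'p::finite^'n::finite \<Rightarrow> ('n \<Rightarrow> nat) \<Rightarrow> real^'p^'p \<Rightarrow> real^'p \<Rightarrow> real^'p \<Rightarrow> real" where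
  "post X Y Q v \<beta> = (\<Prod>i\<in>UNIV. Phi (X $ i \<bullet> \<beta>) ^ Y i * (1 - Phi (X $ i \<bullet> \<beta>)) ^ (1 - Y i)) * prior Q v \<beta>"

end

(*
  With c the right-hand side and M(beta) = Sigma^(-1/2) X^T D(beta) X Sigma^(-1/2), every quotient
  in lam equals |M(beta) Sigma^(1/2) alpha|^2 / |Sigma^(1/2) alpha|^2, so it suffices to show
  0 <= x^T M(beta) x <= c |x|^2: for a symmetric matrix this bounds the operator norm by c.
  The probit weight g takes values in [0, 1] and is at least 2/pi on the nonpositive half-line, so
  0 <= D(beta) and D(beta) <= I - (2/pi) diag(w), where w marks the observations that W(S) collects
  for the orthant S of beta.  Conjugating by Sigma^(-1/2) and applying the Rayleigh bounds to the two
  resulting symmetric matrices yields c.  Sigma is positive definite: for Q = 0 this follows from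
  properness, since the posterior is invariant under translation by any vector in the kernel of X.
*)
theory Submission
  imports Defs "HOL-Real_Asymp.Real_Asymp"
begin

section \<open>The standard normal distribution\<close>

lemma phi_eq: "phi = (\<lambda>x. exp (- x\<^sup>2 / 2) / sqrt (2 * pi))"
  by (simp add: fun_eq_iff std_normal_density_def)

lemma phi_minus [simp]: "phi (- x) = phi x"
  by (simp add: std_normal_density_def)

lemma phi_pos: "0 < phi x"
  by (simp add: normal_density_pos)

lemma phi_has_real_derivative: "(phi has_real_derivative - x * phi x) (at x)"
  unfolding phi_eq by (auto intro!: derivative_eq_intros simp: field_simps)

lemma phi_tendsto_at_bot: "(phi \<longlongrightarrow> 0) at_bot"
  unfolding phi_eq by real_asymp

lemma mult_phi_tendsto_at_bot: "((\<lambda>x. x * phi x) \<longlongrightarrow> 0) at_bot"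
  unfolding phi_eq by real_asymp

lemma interval_integrable_phi: "interval_lebesgue_integrable lborel a b phi"
  unfolding interval_lebesgue_integrable_def set_integrable_def
  using integrable_mult_indicator[of _ lborel phi] by auto

lemma Phi_eq_integral: "Phi x = (\<integral>y. indicator {..x} y *\<^sub>R phi y \<partial>lborel)"
proof -
  have "Phi x = (\<integral>y. indicator {..<x} y *\<^sub>R phi y \<partial>lborel)"
    unfolding Phi_def by (simp add: interval_lebesgue_integral_le_eq set_lebesgue_integral_def)
  also have "\<dots> = (\<integral>y. indicator {..x} y *\<^sub>R phi y \<partial>lborel)"
    by (rule integral_cong_AE)
      (auto intro!: eventually_mono[OF AE_lborel_singleton[of x]] split: split_indicator)
  finally show ?thesis .
qed

lemma Phi_nonneg: "0 \<le> Phi x"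
  unfolding Phi_eq_integral by (rule integral_nonneg_AE) (auto split: split_indicator)

lemma Phi_minus: "Phi (- x) = 1 - Phi x"
proof -
  have "Phi x + Phi (- x) = (LBINT y=-\<infinity>..\<infinity>. phi y)"
    unfolding Phi_def
    by (subst (2) interval_integral_reflect, simp)
      (rule interval_integral_sum, simp add: interval_integrable_phi)
  also have "\<dots> = 1"
    by (simp add: interval_lebesgue_integral_le_eq set_lebesgue_integral_def)
  finally show ?thesis by simp
qed

lemma Phi_has_real_derivative: "(Phi has_real_derivative phi x) (at x)"
proof -
  have Phi_split: "Phi u = Phi x + (LBINT y=ereal x..ereal u. phi y)" for u
    unfolding Phi_def by (rule interval_integral_sum[symmetric]) (simp add: interval_integrable_phi)
  have "((\<lambda>u. LBINT y=ereal x..ereal u. phi y) has_vector_derivative phi x) (at x within {x-1..x+1})"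
    by (rule interval_integral_FTC2) (auto intro!: continuous_intros simp: phi_eq)
  then have "((\<lambda>u. Phi x + (LBINT y=ereal x..ereal u. phi y)) has_real_derivative phi x) (at x)"
    by (auto intro!: derivative_eq_intros simp: at_within_Icc_at has_real_derivative_iff_has_vector_derivative)
  then show ?thesis by (simp add: Phi_split[symmetric])
qed

lemma Phi_tendsto_at_bot: "(Phi \<longlongrightarrow> 0) at_bot"
proof -
  have "((\<lambda>y. \<integral>x. indicator {..y} x *\<^sub>R phi x \<partial>lborel) \<longlongrightarrow> \<integral>x. phi x \<partial>lborel) at_top"
    by (rule tendsto_integral_at_top) auto
  then have "((\<lambda>x. 1 - Phi x) \<longlongrightarrow> 1 - 1) at_top"
    by (intro tendsto_intros) (simp add: Phi_eq_integral[abs_def])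
  then show ?thesis by (simp add: filterlim_at_bot_mirror Phi_minus[symmetric])
qed

lemma Phi_strict_mono: "a < b \<Longrightarrow> Phi a < Phi b"
  by (rule DERIV_pos_imp_increasing[of a b Phi]) (auto intro: Phi_has_real_derivative phi_pos)

lemma Phi_pos: "0 < Phi x"
  using Phi_strict_mono[of "x - 1" x] Phi_nonneg[of "x - 1"] by simp

lemma Phi_less_1: "Phi x < 1"
  using Phi_pos[of "- x"] by (simp add: Phi_minus)

lemma Phi_0: "Phi 0 = 1 / 2"
  using Phi_minus[of 0] by simp

section \<open>Bounds on the probit weight\<close>

lemma has_real_derivative_nonneg_tendsto_at_bot_le:
  fixes f f' :: "real \<Rightarrow> real"
  assumes "x \<le> c"
    and "\<And>t. t \<le> c \<Longrightarrow> (f has_real_derivative f' t) (at t)"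
    and "\<And>t. t \<le> c \<Longrightarrow> 0 \<le> f' t"
    and "(f \<longlongrightarrow> L) at_bot"
  shows "L \<le> f x"
proof (rule tendsto_upperbound[OF assms(4)])
  have "f u \<le> f x" if "u \<le> x" for u
  proof (rule DERIV_nonneg_imp_nondecreasing[OF that])
    fix t assume "u \<le> t" "t \<le> x"
    then have "t \<le> c" using assms(1) by simp
    then show "\<exists>y. (f has_real_derivative y) (at t) \<and> 0 \<le> y" using assms(2,3) by blast
  qed
  then show "\<forall>\<^sub>F u in at_bot. f u \<le> f x"
    by (auto simp: eventually_at_bot_linorder)
qed simp

lemma has_real_derivative_nonpos_tendsto_at_bot_ge:
  fixes f f' :: "real \<Rightarrow> real"
  assumes "x \<le> c"
    and "\<And>t. t \<le> c \<Longrightarrow> (f has_real_derivative f' t) (at t)"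
    and "\<And>t. t \<le> c \<Longrightarrow> f' t \<le> 0"
    and "(f \<longlongrightarrow> L) at_bot"
  shows "f x \<le> L"
  using has_real_derivative_nonneg_tendsto_at_bot_le[of x c "\<lambda>t. - f t" "\<lambda>t. - f' t" "- L"] assms
  by (auto intro: derivative_intros tendsto_minus)

definition mills_gap :: "real \<Rightarrow> real \<Rightarrow> real" where
  "mills_gap a t = Phi t + t * phi t / (t\<^sup>2 + a)"

lemma mills_gap_has_real_derivative:
  assumes "0 < a"
  shows "(mills_gap a has_real_derivative
           phi t * ((a - 1) * t\<^sup>2 + a * (a + 1)) / (t\<^sup>2 + a)\<^sup>2) (at t)"
proof -
  have pos: "0 < t * t + a" using assms by (simp add: add_nonneg_pos)
  have "a * a + (t * (t * (t * t)) + a * (t * (t * 2))) = (t * t + a) * (t * t + a)"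
    by (simp add: algebra_simps)
  then have "a * a + (t * (t * (t * t)) + a * (t * (t * 2))) \<noteq> 0"
    using pos by simp
  with pos show ?thesis
    unfolding mills_gap_def
    by (auto intro!: derivative_eq_intros Phi_has_real_derivative phi_has_real_derivative
        simp: field_simps power2_eq_square)
qed

lemma mills_gap_tendsto_at_bot: "(mills_gap a \<longlongrightarrow> 0) at_bot"
proof -
  have "((\<lambda>t. t * phi t / (t\<^sup>2 + a)) \<longlongrightarrow> 0) at_bot"
    unfolding phi_eq by real_asymp
  then show ?thesis
    unfolding mills_gap_def[abs_def] using tendsto_add[OF Phi_tendsto_at_bot] by fastforce
qed

lemma mills_gap_1_nonneg: "0 \<le> mills_gap 1 t"
  by (rule has_real_derivative_nonneg_tendsto_at_bot_le[OF order_refl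
        mills_gap_has_real_derivative _ mills_gap_tendsto_at_bot])
    (auto intro: less_imp_le phi_pos)

definition gfun_excess :: "real \<Rightarrow> real \<Rightarrow> real" where
  "gfun_excess k t = (phi t)\<^sup>2 + t * phi t * Phi t - k * (Phi t)\<^sup>2"

lemma gfun_minus_eq: "gfun t - k = gfun_excess k t / (Phi t)\<^sup>2"
  using Phi_pos[of t] by (simp add: gfun_def gfun_excess_def field_simps power2_eq_square)

lemma gfun_excess_has_real_derivative:
  assumes "1 / 2 < k"
  shows "(gfun_excess k has_real_derivative
           - phi t * (t\<^sup>2 + (2 * k - 1)) * mills_gap (2 * k - 1) t) (at t)"
proof -
  have "0 < t\<^sup>2 + (2 * k - 1)" using assms by (simp add: add_nonneg_pos)
  then have "- phi t * (t\<^sup>2 + (2 * k - 1)) * mills_gap (2 * k - 1) t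
      = - phi t * ((t\<^sup>2 + (2 * k - 1)) * Phi t + t * phi t)"
    by (simp add: mills_gap_def field_simps)
  moreover have "(gfun_excess k has_real_derivative
      - phi t * ((t\<^sup>2 + (2 * k - 1)) * Phi t + t * phi t)) (at t)"
    unfolding gfun_excess_def[abs_def]
    by (auto intro!: derivative_eq_intros Phi_has_real_derivative phi_has_real_derivative
        simp: algebra_simps power2_eq_square)
  ultimately show ?thesis by (simp only:)
qed

lemma gfun_excess_tendsto_at_bot: "(gfun_excess k \<longlongrightarrow> 0) at_bot"
proof -
  have "((\<lambda>t. (phi t)\<^sup>2 + (t * phi t) * Phi t - k * (Phi t)\<^sup>2) \<longlongrightarrow> 0\<^sup>2 + 0 * 0 - k * 0\<^sup>2) at_bot"
    by (intro tendsto_intros Phi_tendsto_at_bot phi_tendsto_at_bot mult_phi_tendsto_at_bot)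
  then show ?thesis by (simp add: gfun_excess_def[abs_def])
qed

lemma gfun_le_1: "gfun t \<le> 1"
proof -
  have "gfun_excess 1 t \<le> 0"
    by (rule has_real_derivative_nonpos_tendsto_at_bot_ge[OF order_refl
          gfun_excess_has_real_derivative _ gfun_excess_tendsto_at_bot])
      (use mills_gap_1_nonneg phi_pos in \<open>auto intro!: mult_nonneg_nonneg less_imp_le\<close>)
  then have "gfun_excess 1 t / (Phi t)\<^sup>2 \<le> 0" by (simp add: divide_nonpos_nonneg)
  then show ?thesis using gfun_minus_eq[of t 1] by simp
qed

lemma mills_gap_nonpos_then_mono:
  assumes "0 < a" "a < 1"
  obtains x0 where "0 \<le> x0"
    and "\<And>t. t \<le> - x0 \<Longrightarrow> mills_gap a t \<le> 0"
    and "\<And>u v. - x0 \<le> u \<Longrightarrow> u \<le> v \<Longrightarrow> v \<le> 0 \<Longrightarrow> mills_gap a u \<le> mills_gap a v"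
proof
  define x0 where "x0 = sqrt (a * (a + 1) / (1 - a))"
  show "0 \<le> x0" using assms by (simp add: x0_def)
  define m' where "m' t = phi t * ((a - 1) * t\<^sup>2 + a * (a + 1)) / (t\<^sup>2 + a)\<^sup>2" for t
  have m': "(mills_gap a has_real_derivative m' t) (at t)" for t
    unfolding m'_def using assms(1) by (rule mills_gap_has_real_derivative)
  have numerator: "(a - 1) * t\<^sup>2 + a * (a + 1) = (1 - a) * (x0\<^sup>2 - \<bar>t\<bar>\<^sup>2)" for t
    using assms by (simp add: x0_def field_simps)
  have "m' t \<le> 0" if "t \<le> - x0" for t
  proof -
    have "x0\<^sup>2 \<le> \<bar>t\<bar>\<^sup>2" using that \<open>0 \<le> x0\<close> by (intro power_mono) auto
    then have "(a - 1) * t\<^sup>2 + a * (a + 1) \<le> 0"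
      unfolding numerator using assms(2) by (simp add: mult_nonneg_nonpos)
    then have "phi t * ((a - 1) * t\<^sup>2 + a * (a + 1)) \<le> 0"
      using phi_pos[of t] by (simp add: mult_nonneg_nonpos)
    then show ?thesis unfolding m'_def by (simp add: divide_nonpos_nonneg)
  qed
  then show "mills_gap a t \<le> 0" if "t \<le> - x0" for t
    using has_real_derivative_nonpos_tendsto_at_bot_ge[OF that m' _ mills_gap_tendsto_at_bot] by blast
  have m'_nonneg: "0 \<le> m' t" if "- x0 \<le> t" "t \<le> 0" for t
  proof -
    have "\<bar>t\<bar>\<^sup>2 \<le> x0\<^sup>2" using that by (intro power_mono) auto
    then have "0 \<le> (a - 1) * t\<^sup>2 + a * (a + 1)"
      unfolding numerator using assms(2) by simp
    then show ?thesis using phi_pos[of t] by (simp add: m'_def)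
  qed
  show "mills_gap a u \<le> mills_gap a v" if "- x0 \<le> u" "u \<le> v" "v \<le> 0" for u v
  proof (rule DERIV_nonneg_imp_nondecreasing[OF \<open>u \<le> v\<close>])
    fix t assume "u \<le> t" "t \<le> v"
    then have "- x0 \<le> t" "t \<le> 0" using that by linarith+
    then show "\<exists>y. (mills_gap a has_real_derivative y) (at t) \<and> 0 \<le> y"
      using m' m'_nonneg by blast
  qed
qed

lemma gfun_excess_two_div_pi_nonneg:
  assumes "\<theta> \<le> 0"
  shows "0 \<le> gfun_excess (2 / pi) \<theta>"
proof -
  txt \<open>The excess vanishes at \<open>-\<infinity>\<close> and, because \<open>phi 0\<^sup>2 = (2 / pi) * Phi 0\<^sup>2\<close>, at \<open>0\<close>;
    in between it increases while \<open>mills_gap a\<close> is nonpositive and decreases afterwards.\<close>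
  let ?f = "gfun_excess (2 / pi)"
  define a where "a = 2 * (2 / pi) - 1"
  have a: "0 < a" "a < 1" using pi_gt3 pi_less_4 by (auto simp: a_def field_simps)
  obtain x0 where "0 \<le> x0" and m_nonpos: "\<And>t. t \<le> - x0 \<Longrightarrow> mills_gap a t \<le> 0"
    and m_mono: "\<And>u v. - x0 \<le> u \<Longrightarrow> u \<le> v \<Longrightarrow> v \<le> 0 \<Longrightarrow> mills_gap a u \<le> mills_gap a v"
    using mills_gap_nonpos_then_mono[OF a] by blast
  define f' where "f' t = - phi t * (t\<^sup>2 + a) * mills_gap a t" for t
  have f': "(?f has_real_derivative f' t) (at t)" for t
    unfolding f'_def a_def using pi_less_4 by (intro gfun_excess_has_real_derivative) simp
  have f'_nonneg: "0 \<le> f' t \<longleftrightarrow> mills_gap a t \<le> 0" for t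
  proof -
    have "0 < phi t * (t\<^sup>2 + a)" using phi_pos[of t] a by (simp add: add_nonneg_pos)
    then have "phi t * (t\<^sup>2 + a) * mills_gap a t \<le> 0 \<longleftrightarrow> mills_gap a t \<le> 0"
      using mult_le_cancel_left_pos[of "phi t * (t\<^sup>2 + a)" "mills_gap a t" 0] by simp
    then show ?thesis by (simp add: f'_def)
  qed
  have left: "0 \<le> ?f t" if "t \<le> - x0" for t
    using has_real_derivative_nonneg_tendsto_at_bot_le[OF that f' _ gfun_excess_tendsto_at_bot]
      f'_nonneg m_nonpos by blast
  consider "\<theta> \<le> - x0" | "- x0 \<le> \<theta>" "mills_gap a \<theta> \<le> 0" | "- x0 \<le> \<theta>" "0 < mills_gap a \<theta>"
    by linarith
  then show ?thesis
  proof cases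
    case 1
    then show ?thesis by (rule left)
  next
    case 2
    have "?f (- x0) \<le> ?f \<theta>"
    proof (rule DERIV_nonneg_imp_nondecreasing[OF \<open>- x0 \<le> \<theta>\<close>])
      fix t assume "- x0 \<le> t" "t \<le> \<theta>"
      then have "mills_gap a t \<le> 0" using m_mono[of t \<theta>] 2 assms by simp
      then show "\<exists>y. (?f has_real_derivative y) (at t) \<and> 0 \<le> y" using f' f'_nonneg by blast
    qed
    then show ?thesis using left[of "- x0"] by simp
  next
    case 3
    have "?f 0 \<le> ?f \<theta>"
    proof (rule DERIV_nonpos_imp_nonincreasing[OF assms])
      fix t assume "\<theta> \<le> t" "t \<le> 0"
      then have "0 < mills_gap a t" using m_mono[of \<theta> t] 3 by simp
      then show "\<exists>y. (?f has_real_derivative y) (at t) \<and> y \<le> 0" using f' f'_nonneg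
        by (meson linorder_not_le nle_le)
    qed
    moreover have "?f 0 = 0"
      by (simp add: gfun_excess_def Phi_0 std_normal_density_def power2_eq_square
          real_sqrt_mult[symmetric])
    ultimately show ?thesis by simp
  qed
qed

lemma gfun_ge_two_div_pi:
  assumes "\<theta> \<le> 0"
  shows "2 / pi \<le> gfun \<theta>"
proof -
  have "0 \<le> gfun_excess (2 / pi) \<theta> / (Phi \<theta>)\<^sup>2"
    using gfun_excess_two_div_pi_nonneg[OF assms] by simp
  then show ?thesis using gfun_minus_eq[of \<theta> "2 / pi"] by simp
qed

lemma gfun_nonneg: "0 \<le> gfun \<theta>"
proof (cases "\<theta> \<le> 0")
  case True
  moreover have "0 \<le> 2 / pi" by simp
  ultimately show ?thesis using gfun_ge_two_div_pi by (meson order_trans)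
next
  case False
  then show ?thesis using phi_pos[of \<theta>] Phi_pos[of \<theta>] by (simp add: gfun_def)
qed

section \<open>Spectral theory of symmetric matrices\<close>

lemma sym_mat_inner: "sym_mat A \<Longrightarrow> x \<bullet> (A *v y) = (A *v x) \<bullet> (y :: real^'n::finite)"
  unfolding sym_mat_def by (metis dot_lmul_matrix inner_commute vector_transpose_matrix)

lemma sym_matI:
  fixes A :: "real^'n::finite^'n"
  assumes "\<And>x y. x \<bullet> (A *v y) = (A *v x) \<bullet> y"
  shows "sym_mat A"
proof -
  have "transpose A *v x = A *v x" for x
  proof -
    let ?d = "transpose A *v x - A *v x"
    have "(transpose A *v x) \<bullet> ?d = (A *v x) \<bullet> ?d"
      using assms[of x ?d] by (metis dot_lmul_matrix inner_commute vector_transpose_matrix)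
    then have "?d \<bullet> ?d = 0" by (simp add: inner_diff_left)
    then show ?thesis by simp
  qed
  then show ?thesis unfolding sym_mat_def by (simp add: matrix_eq)
qed

lemma linear_plus_quadratic_nonpos_imp_zero:
  fixes s q :: real
  assumes "q \<le> 0" and "\<And>t. 2 * t * s + t\<^sup>2 * q \<le> 0"
  shows "s = 0"
proof -
  define t where "t = s / (1 - q)"
  have "t * (1 - q) = s" using assms(1) by (simp add: t_def)
  then have "(1 - q)\<^sup>2 * (2 * t * s + t\<^sup>2 * q) = s\<^sup>2 * (2 - q)"
    by (simp add: power2_eq_square algebra_simps) (simp add: algebra_simps flip: \<open>t * (1 - q) = s\<close>)
  moreover have "(1 - q)\<^sup>2 * (2 * t * s + t\<^sup>2 * q) \<le> 0"
    using assms(2) by (simp add: mult_nonneg_nonpos)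
  ultimately have "s\<^sup>2 * (2 - q) \<le> 0" by simp
  then show ?thesis using assms(1) by (simp add: mult_le_0_iff)
qed

text \<open>The first variation of the Rayleigh quotient at the maximiser vanishes in every direction
  of the subspace.\<close>
lemma sym_mat_rayleigh_max_eigenvector:
  fixes A :: "real^'n::finite^'n"
  assumes symA: "sym_mat A" and V: "subspace V" "\<forall>x\<in>V. A *v x \<in> V"
    and u: "u \<in> V" "u \<bullet> u = 1"
    and max: "\<And>y. y \<in> V \<Longrightarrow> y \<bullet> (A *v y) \<le> (u \<bullet> (A *v u)) * (y \<bullet> y)"
  shows "A *v u = (u \<bullet> (A *v u)) *\<^sub>R u"
proof -
  define c where "c = u \<bullet> (A *v u)"
  define w where "w = A *v u - c *\<^sub>R u"
  have w: "w \<in> V" using V u by (simp add: w_def subspace_diff subspace_scale)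
  have "2 * t * (w \<bullet> w) + t\<^sup>2 * (w \<bullet> (A *v w) - c * (w \<bullet> w)) \<le> 0" for t
  proof -
    have "u + t *\<^sub>R w \<in> V" using V(1) u w by (simp add: subspace_add subspace_scale)
    then have "(u + t *\<^sub>R w) \<bullet> (A *v (u + t *\<^sub>R w)) \<le> c * ((u + t *\<^sub>R w) \<bullet> (u + t *\<^sub>R w))"
      unfolding c_def by (rule max)
    moreover have "u \<bullet> (A *v w) = w \<bullet> (A *v u)"
      using sym_mat_inner[OF symA, of u w] by (simp add: inner_commute)
    moreover have "w \<bullet> u = 0"
      using u(2) by (simp add: w_def c_def inner_diff_left inner_diff_right inner_commute)
    moreover have "w \<bullet> (A *v u) = w \<bullet> w"
      using \<open>w \<bullet> u = 0\<close> by (simp add: w_def inner_diff_right)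
    ultimately show ?thesis
      using u(2) c_def by (simp add: algebra_simps inner_add_left inner_add_right matrix_vector_right_distrib
          matrix_vector_mult_scaleR inner_commute[of u w] power2_eq_square)
  qed
  moreover have "w \<bullet> (A *v w) - c * (w \<bullet> w) \<le> 0" using max[OF w] by (simp add: c_def)
  ultimately have "w \<bullet> w = 0" using linear_plus_quadratic_nonpos_imp_zero by blast
  then show ?thesis by (simp add: w_def c_def)
qed

lemma quadratic_form_attains_max_on_subspace:
  fixes A :: "real^'n::finite^'n"
  assumes V: "subspace V" "V \<noteq> {0}"
  obtains u where "u \<in> V" "u \<bullet> u = 1" "\<And>y. y \<in> V \<Longrightarrow> y \<bullet> (A *v y) \<le> (u \<bullet> (A *v u)) * (y \<bullet> y)"
proof -
  let ?K = "V \<inter> sphere 0 1"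
  obtain x where x: "x \<in> V" "x \<noteq> 0" using V subspace_0 by blast
  have "x /\<^sub>R norm x \<in> ?K" using x V(1) by (auto simp: subspace_scale)
  moreover have "compact ?K" by (intro closed_Int_compact closed_subspace V compact_sphere)
  ultimately obtain u where u: "u \<in> ?K" and umax: "\<And>y. y \<in> ?K \<Longrightarrow> y \<bullet> (A *v y) \<le> u \<bullet> (A *v u)"
    using continuous_attains_sup[of ?K "\<lambda>y. y \<bullet> (A *v y)"] by (force intro: continuous_intros)
  have "y \<bullet> (A *v y) \<le> (u \<bullet> (A *v u)) * (y \<bullet> y)" if "y \<in> V" for y
  proof (cases "y = 0")
    case False
    then have "y /\<^sub>R norm y \<in> ?K" using that V(1) by (auto simp: subspace_scale)
    then have "(y /\<^sub>R norm y) \<bullet> (A *v (y /\<^sub>R norm y)) \<le> u \<bullet> (A *v u)" by (rule umax)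
    moreover have "(y /\<^sub>R norm y) \<bullet> (A *v (y /\<^sub>R norm y)) = (y \<bullet> (A *v y)) / (norm y)\<^sup>2"
      by (simp add: matrix_vector_mult_scaleR power2_eq_square divide_inverse)
    ultimately have "(y \<bullet> (A *v y)) / (norm y)\<^sup>2 \<le> u \<bullet> (A *v u)" by simp
    then show ?thesis using False by (simp add: divide_le_eq power2_norm_eq_inner)
  qed simp
  moreover have "u \<bullet> u = 1" using u by (simp add: dot_square_norm)
  ultimately show ?thesis using u by (intro that) auto
qed

lemma sym_mat_eigenvector_orthogonal_complement:
  fixes A :: "real^'n::finite^'n"
  assumes symA: "sym_mat A" and V: "subspace V" "\<forall>x\<in>V. A *v x \<in> V"
    and u: "u \<in> V" "u \<noteq> 0" "A *v u = c *\<^sub>R u"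
  defines "W \<equiv> V \<inter> {x. orthogonal u x}"
  shows "subspace W" and "\<forall>x\<in>W. A *v x \<in> W" and "dim W < dim V"
proof -
  show W: "subspace W"
    unfolding W_def by (rule subspace_inter[OF V(1) subspace_orthogonal_to_vector])
  show "\<forall>x\<in>W. A *v x \<in> W"
  proof
    fix x assume x: "x \<in> W"
    have "u \<bullet> (A *v x) = c * (u \<bullet> x)" by (simp add: sym_mat_inner[OF symA] u(3))
    then show "A *v x \<in> W" using x V(2) by (auto simp: W_def orthogonal_def)
  qed
  show "dim W < dim V"
  proof (rule dim_psubset)
    have "u \<notin> W" using u(2) by (auto simp: W_def orthogonal_def)
    then show "span W \<subset> span V"
      using u(1) W V(1) by (auto simp: W_def span_eq_iff[THEN iffD2])
  qed
qed

lemma sym_mat_invariant_subspace_eigenbasis: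
  fixes A :: "real^'n::finite^'n"
  assumes symA: "sym_mat A" and "subspace V" and "\<forall>x\<in>V. A *v x \<in> V"
  shows "\<exists>B. B \<subseteq> V \<and> pairwise orthogonal B \<and> (\<forall>b\<in>B. norm b = 1) \<and> span B = V \<and>
           (\<forall>b\<in>B. \<exists>c. A *v b = c *\<^sub>R b)"
  using assms(2,3)
proof (induction "dim V" arbitrary: V rule: less_induct)
  case less
  note V = less.prems
  show ?case
  proof (cases "V = {0}")
    case True
    then show ?thesis by (intro exI[of _ "{}"]) auto
  next
    case False
    obtain u where u: "u \<in> V" "u \<bullet> u = 1"
      and max: "\<And>y. y \<in> V \<Longrightarrow> y \<bullet> (A *v y) \<le> (u \<bullet> (A *v u)) * (y \<bullet> y)"
      using quadratic_form_attains_max_on_subspace[where A = A, OF V(1) False] by blast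
    have eig: "A *v u = (u \<bullet> (A *v u)) *\<^sub>R u"
      by (rule sym_mat_rayleigh_max_eigenvector[OF symA V u max])
    define W where "W = V \<inter> {x. orthogonal u x}"
    have "u \<noteq> 0" using u(2) by auto
    note W = sym_mat_eigenvector_orthogonal_complement[OF symA V u(1) this eig, folded W_def]
    obtain B where B: "B \<subseteq> W" "pairwise orthogonal B" "\<forall>b\<in>B. norm b = 1"
      "span B = W" "\<forall>b\<in>B. \<exists>c. A *v b = c *\<^sub>R b"
      using less.hyps[OF W(3) W(1,2)] by blast
    have "V \<subseteq> span (insert u B)"
    proof
      fix x assume x: "x \<in> V"
      have "x - (u \<bullet> x) *\<^sub>R u \<in> W"
        using x u V(1) by (auto simp: W_def orthogonal_def subspace_diff subspace_scale inner_diff_right)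
      then show "x \<in> span (insert u B)" using B(4) by (auto simp: span_breakdown_eq)
    qed
    moreover have "span (insert u B) \<subseteq> V"
      using B(1) u(1) V(1) by (intro span_minimal) (auto simp: W_def)
    moreover have "pairwise orthogonal (insert u B)"
      using B(1,2) by (auto simp: pairwise_insert W_def orthogonal_commute)
    moreover have "\<forall>b\<in>insert u B. norm b = 1" using B(3) u(2) by (simp add: norm_eq_1)
    moreover have "\<forall>b\<in>insert u B. \<exists>c. A *v b = c *\<^sub>R b" using B(5) eig by blast
    moreover have "insert u B \<subseteq> V" using B(1) u(1) by (auto simp: W_def)
    ultimately show ?thesis by blast
  qed
qed

lemma sym_mat_eigenbasis:
  fixes A :: "real^'n::finite^'n"
  assumes symA: "sym_mat A"
  obtains B evl where "finite B"
    and "\<And>b b'. b \<in> B \<Longrightarrow> b' \<in> B \<Longrightarrow> b \<bullet> b' = (if b = b' then 1 else 0)"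
    and "\<And>x. x = (\<Sum>b\<in>B. (b \<bullet> x) *\<^sub>R b)"
    and "\<And>b. b \<in> B \<Longrightarrow> A *v b = evl b *\<^sub>R b"
proof -
  obtain B where B: "pairwise orthogonal B" "\<forall>b\<in>B. norm b = 1" "span B = UNIV"
      "\<forall>b\<in>B. \<exists>c. A *v b = c *\<^sub>R b"
    using sym_mat_invariant_subspace_eigenbasis[OF symA, of UNIV] by auto
  define evl where "evl b = (SOME c. A *v b = c *\<^sub>R b)" for b
  have evl: "A *v b = evl b *\<^sub>R b" if "b \<in> B" for b
    using B(4) that unfolding evl_def by (metis (mono_tags) someI_ex)
  have fin: "finite B"
    using B(1,2) by (intro finiteI_independent pairwise_orthogonal_independent) auto
  have orthonormal: "b \<bullet> b' = (if b = b' then 1 else 0)" if "b \<in> B" "b' \<in> B" for b b'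
    using that B(1,2) by (auto simp: pairwise_def orthogonal_def dot_square_norm)
  have expansion: "x = (\<Sum>b\<in>B. (b \<bullet> x) *\<^sub>R b)" for x
  proof -
    have "x \<in> span B" using B(3) by simp
    then obtain u where u: "x = (\<Sum>v\<in>B. u v *\<^sub>R v)" using span_finite[OF fin] by auto
    have "b \<bullet> x = u b" if "b \<in> B" for b
    proof -
      have "b \<bullet> x = (\<Sum>v\<in>B. if v = b then u v else 0)"
        unfolding u inner_sum_right using that by (intro sum.cong) (auto simp: orthonormal)
      then show ?thesis using fin that by simp
    qed
    then show ?thesis by (simp add: u cong: sum.cong)
  qed
  show thesis by (rule that[OF fin orthonormal expansion evl])
qed

lemma eigenbasis_inner_self:
  assumes "\<And>x. x = (\<Sum>b\<in>B. (b \<bullet> x) *\<^sub>R b)"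
  shows "y \<bullet> y = (\<Sum>b\<in>B. (b \<bullet> y)\<^sup>2)"
proof -
  have "y \<bullet> y = y \<bullet> (\<Sum>b\<in>B. (b \<bullet> y) *\<^sub>R b)" by (subst assms[of y]) simp
  then show ?thesis by (simp add: inner_sum_right power2_eq_square inner_commute)
qed

lemma eigenbasis_quadratic_form:
  fixes A :: "real^'n::finite^'n"
  assumes symA: "sym_mat A"
    and expansion: "\<And>x. x = (\<Sum>b\<in>B. (b \<bullet> x) *\<^sub>R b)"
    and evl: "\<And>b. b \<in> B \<Longrightarrow> A *v b = evl b *\<^sub>R b"
  shows "y \<bullet> (A *v y) = (\<Sum>b\<in>B. evl b * (b \<bullet> y)\<^sup>2)"
proof -
  have "y \<bullet> (A *v y) = (A *v y) \<bullet> (\<Sum>b\<in>B. (b \<bullet> y) *\<^sub>R b)"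
    by (subst expansion[of y]) (simp add: inner_commute)
  also have "\<dots> = (\<Sum>b\<in>B. (b \<bullet> y) * (y \<bullet> (A *v b)))"
    by (simp add: inner_sum_right sym_mat_inner[OF symA, of y])
  also have "\<dots> = (\<Sum>b\<in>B. evl b * (b \<bullet> y)\<^sup>2)"
    by (intro sum.cong) (simp_all add: evl inner_commute power2_eq_square)
  finally show ?thesis .
qed

lemma eigenvalues_eq_eigenbasis:
  fixes A :: "real^'n::finite^'n"
  assumes symA: "sym_mat A"
    and orthonormal: "\<And>b b'. b \<in> B \<Longrightarrow> b' \<in> B \<Longrightarrow> b \<bullet> b' = (if b = b' then 1 else 0)"
    and expansion: "\<And>x. x = (\<Sum>b\<in>B. (b \<bullet> x) *\<^sub>R b)"
    and evl: "\<And>b. b \<in> B \<Longrightarrow> A *v b = evl b *\<^sub>R b"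
  shows "eigenvalues A = evl ` B"
proof
  show "eigenvalues A \<subseteq> evl ` B"
  proof
    fix c assume "c \<in> eigenvalues A"
    then obtain x where x: "x \<noteq> 0" "A *v x = c *\<^sub>R x" by (auto simp: eigenvalues_def)
    have "\<exists>b\<in>B. b \<bullet> x \<noteq> 0"
    proof (rule ccontr)
      assume "\<not> (\<exists>b\<in>B. b \<bullet> x \<noteq> 0)"
      then have "x = 0" using expansion[of x] by simp
      with x(1) show False by simp
    qed
    then obtain b where b: "b \<in> B" "b \<bullet> x \<noteq> 0" by blast
    have "c * (b \<bullet> x) = (A *v b) \<bullet> x" using x(2) by (simp add: sym_mat_inner[OF symA, symmetric])
    also have "\<dots> = evl b * (b \<bullet> x)" using b by (simp add: evl)
    finally show "c \<in> evl ` B" using b by simp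
  qed
  show "evl ` B \<subseteq> eigenvalues A"
  proof
    fix c assume "c \<in> evl ` B"
    then obtain b where b: "b \<in> B" "c = evl b" by blast
    have "b \<noteq> 0" using orthonormal[OF b(1) b(1)] by auto
    then show "c \<in> eigenvalues A" using b evl unfolding eigenvalues_def by blast
  qed
qed

lemma sym_mat_quadratic_form_bounds:
  fixes A :: "real^'n::finite^'n"
  assumes symA: "sym_mat A"
  shows "lambda_min A * (y \<bullet> y) \<le> y \<bullet> (A *v y)" and "y \<bullet> (A *v y) \<le> lambda_max A * (y \<bullet> y)"
proof -
  obtain B evl where fin: "finite B"
    and orthonormal: "\<And>b b'. b \<in> B \<Longrightarrow> b' \<in> B \<Longrightarrow> b \<bullet> b' = (if b = b' then 1 else 0)"
    and expansion: "\<And>x. x = (\<Sum>b\<in>B. (b \<bullet> x) *\<^sub>R b)"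
    and evl: "\<And>b. b \<in> B \<Longrightarrow> A *v b = evl b *\<^sub>R b"
    using sym_mat_eigenbasis[OF symA] by blast
  have eigenvalues: "eigenvalues A = evl ` B"
    by (rule eigenvalues_eq_eigenbasis[OF symA orthonormal expansion evl])
  note form = eigenbasis_quadratic_form[OF symA expansion evl] eigenbasis_inner_self[OF expansion]
  have "lambda_min A \<le> evl b" "evl b \<le> lambda_max A" if "b \<in> B" for b
    unfolding lambda_min_def lambda_max_def eigenvalues using fin that by auto
  then have "(\<Sum>b\<in>B. lambda_min A * (b \<bullet> y)\<^sup>2) \<le> (\<Sum>b\<in>B. evl b * (b \<bullet> y)\<^sup>2)"
    "(\<Sum>b\<in>B. evl b * (b \<bullet> y)\<^sup>2) \<le> (\<Sum>b\<in>B. lambda_max A * (b \<bullet> y)\<^sup>2)"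
    by (auto intro!: sum_mono mult_right_mono)
  then show "lambda_min A * (y \<bullet> y) \<le> y \<bullet> (A *v y)" "y \<bullet> (A *v y) \<le> lambda_max A * (y \<bullet> y)"
    by (simp_all add: form sum_distrib_left)
qed

lemma matrix_vector_mult_sum: "(\<Sum>b\<in>S. M b) *v x = (\<Sum>b\<in>S. M b *v x)"
  by (induct S rule: infinite_finite_induct) (simp_all add: matrix_vector_mult_add_rdistrib)

lemma outer_mult_vector: "outer b c *v x = (c \<bullet> x) *\<^sub>R (b :: real^'n::finite)"
  by (simp add: vec_eq_iff matrix_vector_mult_def outer_def inner_vec_def sum_distrib_left mult_ac)

lemma matrix_eq_on_expansion:
  fixes A C :: "real^'n::finite^'m::finite"
  assumes "\<And>x. x = (\<Sum>b\<in>B. (b \<bullet> x) *\<^sub>R b)" and "\<And>b. b \<in> B \<Longrightarrow> A *v b = C *v b"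
  shows "A = C"
proof -
  have "A *v x = C *v x" for x
    by (subst (1 2) assms(1)[of x])
      (simp add: linear_sum[OF matrix_vector_mul_linear] matrix_vector_mult_scaleR assms(2))
  then show ?thesis by (simp add: matrix_eq)
qed

lemma psd_eigenvalue_nonneg:
  assumes "psd A" "A *v b = e *\<^sub>R b" "b \<noteq> 0"
  shows "0 \<le> e"
proof -
  have "0 \<le> b \<bullet> (A *v b)" using assms(1) by (simp add: psd_def)
  then have "0 \<le> e * (b \<bullet> b)" by (simp add: assms(2))
  moreover have "0 < b \<bullet> b" using assms(3) by simp
  ultimately show ?thesis by (simp add: zero_le_mult_iff)
qed

lemma psd_sqrt_exists:
  fixes S :: "real^'n::finite^'n"
  assumes psdS: "psd S"
  shows "\<exists>R. psd R \<and> R ** R = S"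
proof -
  have "sym_mat S" using psdS by (simp add: psd_def)
  then obtain B evl where fin: "finite B"
    and orthonormal: "\<And>b b'. b \<in> B \<Longrightarrow> b' \<in> B \<Longrightarrow> b \<bullet> b' = (if b = b' then 1 else 0)"
    and expansion: "\<And>x. x = (\<Sum>b\<in>B. (b \<bullet> x) *\<^sub>R b)"
    and evl: "\<And>b. b \<in> B \<Longrightarrow> S *v b = evl b *\<^sub>R b"
    using sym_mat_eigenbasis by blast
  have evl_nonneg: "0 \<le> evl b" if "b \<in> B" for b
    using psd_eigenvalue_nonneg[OF psdS evl[OF that]] orthonormal[OF that that] by fastforce
  define R where "R = (\<Sum>b\<in>B. sqrt (evl b) *\<^sub>R outer b b)"
  have R: "x \<bullet> (R *v y) = (\<Sum>b\<in>B. sqrt (evl b) * (b \<bullet> x) * (b \<bullet> y))" for x y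
    by (simp add: R_def matrix_vector_mult_sum scaleR_matrix_vector_assoc[symmetric] outer_mult_vector
        inner_sum_right mult_ac inner_commute)
  have Rb: "R *v b = sqrt (evl b) *\<^sub>R b" if b: "b \<in> B" for b
  proof -
    have "R *v b = (\<Sum>b'\<in>B. if b' = b then sqrt (evl b) *\<^sub>R b else 0)"
      unfolding R_def matrix_vector_mult_sum using b
      by (intro sum.cong) (auto simp: outer_mult_vector orthonormal scaleR_matrix_vector_assoc[symmetric])
    then show ?thesis using fin b by simp
  qed
  have "psd R"
    unfolding psd_def
  proof (intro conjI allI sym_matI)
    show "x \<bullet> (R *v y) = (R *v x) \<bullet> y" for x y
      using R[of x y] R[of y x] by (simp add: inner_commute mult_ac)
    show "0 \<le> x \<bullet> (R *v x)" for x
      unfolding R by (intro sum_nonneg) (auto simp: evl_nonneg mult.assoc)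
  qed
  moreover have "R ** R = S"
    by (rule matrix_eq_on_expansion[OF expansion])
      (simp add: matrix_vector_mul_assoc[symmetric] Rb evl matrix_vector_mult_scaleR evl_nonneg)
  ultimately show ?thesis by blast
qed

lemma psd_square_eigenvector:
  fixes R :: "real^'n::finite^'n"
  assumes psdR: "psd R" and "0 \<le> a" and RR: "R *v (R *v b) = a\<^sup>2 *\<^sub>R b"
  shows "R *v b = a *\<^sub>R b"
proof -
  define w where "w = R *v b - a *\<^sub>R b"
  have Rw: "R *v w = - a *\<^sub>R w"
    by (simp add: w_def matrix_vector_mult_diff_distrib matrix_vector_mult_scaleR RR
        algebra_simps power2_eq_square)
  have "w = 0"
  proof (cases "a = 0")
    case True
    have "w \<bullet> w = b \<bullet> (R *v w)"
      using psdR True by (simp add: w_def psd_def sym_mat_inner)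
    then show ?thesis using Rw True by simp
  next
    case False
    have "0 \<le> w \<bullet> (R *v w)" using psdR by (simp add: psd_def)
    then have "a * (w \<bullet> w) \<le> 0" by (simp add: Rw)
    then have "w \<bullet> w \<le> 0" using False \<open>0 \<le> a\<close> by (simp add: mult_le_0_iff)
    then show ?thesis by (metis inner_eq_zero_iff inner_ge_zero order_antisym)
  qed
  then show ?thesis by (simp add: w_def)
qed

lemma psd_sqrt_unique:
  fixes R1 R2 :: "real^'n::finite^'n"
  assumes psd1: "psd R1" and psd2: "psd R2" and eq: "R1 ** R1 = R2 ** R2"
  shows "R1 = R2"
proof -
  have "sym_mat R1" using psd1 by (simp add: psd_def)
  then obtain B evl where "finite B"
    and orthonormal: "\<And>b b'. b \<in> B \<Longrightarrow> b' \<in> B \<Longrightarrow> b \<bullet> b' = (if b = b' then 1 else 0)"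
    and expansion: "\<And>x. x = (\<Sum>b\<in>B. (b \<bullet> x) *\<^sub>R b)"
    and evl: "\<And>b. b \<in> B \<Longrightarrow> R1 *v b = evl b *\<^sub>R b"
    using sym_mat_eigenbasis by blast
  show ?thesis
  proof (rule matrix_eq_on_expansion[OF expansion])
    fix b assume b: "b \<in> B"
    have evl_nonneg: "0 \<le> evl b"
      using psd_eigenvalue_nonneg[OF psd1 evl[OF b]] orthonormal[OF b b] by fastforce
    have "R2 *v (R2 *v b) = R1 *v (R1 *v b)" by (simp add: matrix_vector_mul_assoc eq)
    then have "R2 *v (R2 *v b) = (evl b)\<^sup>2 *\<^sub>R b"
      using b by (simp add: evl matrix_vector_mult_scaleR power2_eq_square)
    then show "R1 *v b = R2 *v b"
      using psd_square_eigenvector[OF psd2 evl_nonneg] evl[OF b] by simp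
  qed
qed

lemma mat_sqrt:
  fixes S :: "real^'n::finite^'n"
  assumes "psd S"
  shows "psd (mat_sqrt S)" and "mat_sqrt S ** mat_sqrt S = S"
proof -
  have "\<exists>!R. psd R \<and> R ** R = S"
    using psd_sqrt_exists[OF assms] psd_sqrt_unique by blast
  then have "psd (mat_sqrt S) \<and> mat_sqrt S ** mat_sqrt S = S"
    unfolding mat_sqrt_def by (rule theI')
  then show "psd (mat_sqrt S)" "mat_sqrt S ** mat_sqrt S = S" by auto
qed

lemma mat_isqrt:
  fixes S :: "real^'n::finite^'n"
  assumes pdS: "pd S"
  shows "mat_isqrt S ** mat_sqrt S = mat 1" and "sym_mat (mat_isqrt S)"
proof -
  let ?R = "mat_sqrt S" and ?T = "mat_isqrt S"
  have "psd S" using pdS unfolding pd_def psd_def by (metis inner_zero_left less_imp_le order_refl)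
  note R = mat_sqrt[OF this]
  have "x = 0" if "?R *v x = 0" for x
  proof -
    have "S *v x = 0" using R(2) that by (metis matrix_vector_mul_assoc matrix_vector_mult_0_right)
    then show "x = 0" using pdS unfolding pd_def by force
  qed
  then have "invertible ?R"
    using matrix_left_invertible_ker invertible_left_inverse by blast
  then have inverse: "?R ** ?T = mat 1 \<and> ?T ** ?R = mat 1"
    unfolding mat_isqrt_def matrix_inv_def invertible_def by (rule someI_ex)
  then show "?T ** ?R = mat 1" by simp
  have "transpose ?T ** ?R = mat 1"
    using R(1) inverse unfolding psd_def sym_mat_def by (metis matrix_transpose_mul transpose_mat)
  then have "transpose ?T = transpose ?T ** (?R ** ?T)" using inverse by simp
  also have "\<dots> = ?T" using \<open>transpose ?T ** ?R = mat 1\<close> by (simp add: matrix_mul_assoc)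
  finally have "transpose ?T = ?T" .
  then show "sym_mat ?T" by (simp add: sym_mat_def)
qed

lemma quadratic_form_bounds_imp_nonneg:
  fixes M :: "real^'n::finite^'n"
  assumes "\<And>x. 0 \<le> x \<bullet> (M *v x)" and "\<And>x. x \<bullet> (M *v x) \<le> c * (x \<bullet> x)"
  shows "0 \<le> c"
proof -
  have "0 \<le> c * ((1 :: real^'n) \<bullet> 1)" by (rule order_trans[OF assms])
  moreover have "0 < (1 :: real^'n) \<bullet> 1" by (simp add: vec_eq_iff)
  ultimately show ?thesis by (simp add: zero_le_mult_iff)
qed

lemma sym_mat_norm_le:
  fixes M :: "real^'n::finite^'n"
  assumes symM: "sym_mat M"
    and nonneg: "\<And>x. 0 \<le> x \<bullet> (M *v x)" and bound: "\<And>x. x \<bullet> (M *v x) \<le> c * (x \<bullet> x)"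
  shows "norm (M *v u) \<le> c * norm u"
proof -
  obtain B evl where "finite B"
    and orthonormal: "\<And>b b'. b \<in> B \<Longrightarrow> b' \<in> B \<Longrightarrow> b \<bullet> b' = (if b = b' then 1 else 0)"
    and expansion: "\<And>x. x = (\<Sum>b\<in>B. (b \<bullet> x) *\<^sub>R b)"
    and evl: "\<And>b. b \<in> B \<Longrightarrow> M *v b = evl b *\<^sub>R b"
    using sym_mat_eigenbasis[OF symM] by blast
  have "0 \<le> evl b \<and> evl b \<le> c" if "b \<in> B" for b
    using nonneg[of b] bound[of b] evl[OF that] orthonormal[OF that that] by simp
  then have "(b \<bullet> (M *v u))\<^sup>2 \<le> c\<^sup>2 * (b \<bullet> u)\<^sup>2" if "b \<in> B" for b
    using that evl[OF that] sym_mat_inner[OF symM, of b u]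
    by (simp add: power_mult_distrib power_mono mult_right_mono)
  then have "(M *v u) \<bullet> (M *v u) \<le> c\<^sup>2 * (u \<bullet> u)"
    unfolding eigenbasis_inner_self[OF expansion, of "M *v u"] eigenbasis_inner_self[OF expansion, of u]
    by (simp add: sum_distrib_left sum_mono)
  moreover have "0 \<le> c" using nonneg bound by (rule quadratic_form_bounds_imp_nonneg)
  ultimately have "(norm (M *v u))\<^sup>2 \<le> (c * norm u)\<^sup>2"
    by (simp add: power2_norm_eq_inner power_mult_distrib)
  then show ?thesis by (rule power2_le_imp_le) (simp add: \<open>0 \<le> c\<close>)
qed

section \<open>Properness of the posterior\<close>

lemma emeasure_lborel_open_pos:
  fixes A :: "'a::euclidean_space set"
  assumes "open A" "x \<in> A"
  shows "0 < emeasure lborel A"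
proof -
  obtain a b where ab: "box a b \<subseteq> A" "x \<in> box a b" "\<forall>i\<in>Basis. a \<bullet> i < b \<bullet> i"
    using open_contains_box[OF assms] by blast
  have "0 < emeasure lborel (box a b)"
    using ab(3) unfolding emeasure_lborel_box_eq by (force intro!: prod_pos simp: algebra_simps)
  also have "\<dots> \<le> emeasure lborel A" using ab(1) assms(1) by (intro emeasure_mono) auto
  finally show ?thesis .
qed

lemma lborel_integral_translate:
  fixes g :: "'a::euclidean_space \<Rightarrow> real"
  assumes [measurable]: "g \<in> borel_measurable borel"
  shows "(\<integral>x. g (c + x) \<partial>lborel) = (\<integral>x. g x \<partial>lborel)"
proof -
  have "(\<integral>x. g x \<partial>lborel) = (\<integral>x. g x \<partial>distr lborel borel ((+) c))" by (simp add: lborel_distr_plus)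
  also have "\<dots> = (\<integral>x. g (c + x) \<partial>lborel)" by (rule integral_distr) auto
  finally show ?thesis by simp
qed

lemma integral_indicator_pos_of_open_subset:
  fixes f :: "'a::euclidean_space \<Rightarrow> real"
  assumes intf: "integrable lborel f" and pos: "\<And>x. 0 < f x"
    and A: "A \<in> sets borel" and U: "open U" "x \<in> U" "U \<subseteq> A"
  shows "0 < (\<integral>x. indicator A x * f x \<partial>lborel)"
proof -
  have int: "integrable lborel (\<lambda>x. indicator A x * f x)"
    using integrable_mult_indicator[of A lborel f] A intf by simp
  have "0 < emeasure lborel U" using U(1,2) by (rule emeasure_lborel_open_pos)
  also have "\<dots> \<le> emeasure lborel A" using A U(3) by (intro emeasure_mono) auto
  finally have "\<not> (AE x in lborel. indicator A x * f x = 0)"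
    using A by (subst AE_iff_measurable[of A]) (auto simp: indicator_def pos[THEN less_imp_neq, symmetric])
  moreover have "0 \<le> (\<integral>x. indicator A x * f x \<partial>lborel)"
    by (rule integral_nonneg_AE) (auto simp: indicator_def less_imp_le[OF pos])
  moreover have "(\<integral>x. indicator A x * f x \<partial>lborel) = 0 \<longleftrightarrow> (AE x in lborel. indicator A x * f x = 0)"
    by (rule integral_nonneg_eq_0_iff_AE[OF int]) (auto simp: indicator_def less_imp_le[OF pos])
  ultimately show ?thesis by simp
qed

text \<open>The slabs \<open>{x. k \<le> x \<bullet> w / (w \<bullet> w) < k + 1}\<close> are translates of each other,
  so each carries the same positive mass of \<open>f\<close>, and \<open>N\<close> of them exceed \<open>\<integral>f\<close>.\<close>
lemma integrable_pos_periodic_imp_period_0: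
  fixes f :: "'a::euclidean_space \<Rightarrow> real"
  assumes intf: "integrable lborel f" and pos: "\<And>x. 0 < f x" and periodic: "\<And>x. f (w + x) = f x"
  shows "w = 0"
proof (rule ccontr)
  assume "w \<noteq> 0"
  then have ww: "0 < w \<bullet> w" by simp
  have [measurable]: "f \<in> borel_measurable borel" using borel_measurable_integrable[OF intf] by simp
  define h where "h x = (x \<bullet> w) / (w \<bullet> w)" for x
  have [measurable]: "h \<in> borel_measurable borel" unfolding h_def by measurable
  have h_translate: "h (w + x) = h x + 1" for x
    using ww by (simp add: h_def inner_add_left field_simps)
  define slab where "slab k = {x. real k \<le> h x \<and> h x < real k + 1}" for k :: nat
  have [measurable]: "slab k \<in> sets borel" for k unfolding slab_def by measurable
  have int_ind: "integrable lborel (\<lambda>x. indicator A x * f x)" if "A \<in> sets borel" for A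
    using integrable_mult_indicator[of A lborel f] that intf by simp
  define c where "c k = (\<integral>x. indicator (slab k) x * f x \<partial>lborel)" for k
  have "c (Suc k) = c k" for k
  proof -
    have "c (Suc k) = (\<integral>x. indicator (slab (Suc k)) (w + x) * f (w + x) \<partial>lborel)"
      unfolding c_def by (rule lborel_integral_translate[symmetric]) measurable
    also have "\<dots> = c k"
      unfolding c_def by (intro Bochner_Integration.integral_cong refl)
        (auto simp: periodic slab_def h_translate indicator_def)
    finally show ?thesis .
  qed
  then have c_const: "c k = c 0" for k by (induct k) simp_all
  have union: "(\<integral>x. indicator {x. 0 \<le> h x \<and> h x < real N} x * f x \<partial>lborel) = real N * c 0" for N
  proof (induct N)
    case (Suc N)
    have "(\<lambda>x. indicator {x. 0 \<le> h x \<and> h x < real (Suc N)} x * f x) =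
        (\<lambda>x. indicator {x. 0 \<le> h x \<and> h x < real N} x * f x + indicator (slab N) x * f x)"
      by (rule ext) (auto simp: slab_def indicator_def)
    then have "(\<integral>x. indicator {x. 0 \<le> h x \<and> h x < real (Suc N)} x * f x \<partial>lborel) =
        (\<integral>x. indicator {x. 0 \<le> h x \<and> h x < real N} x * f x \<partial>lborel) + c N"
      unfolding c_def by (simp add: Bochner_Integration.integral_add int_ind)
    then show ?case using Suc c_const[of N] by (simp add: algebra_simps)
  qed simp
  have "real N * c 0 \<le> (\<integral>x. f x \<partial>lborel)" for N
    unfolding union[symmetric]
    by (rule integral_mono[OF int_ind intf]) (auto simp: indicator_def less_imp_le[OF pos])
  moreover have "0 < c 0"
    unfolding c_def
  proof (rule integral_indicator_pos_of_open_subset[OF intf pos])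
    show "open {x. 0 < h x \<and> h x < 1}"
      unfolding h_def using ww by (intro open_Collect_conj open_Collect_less continuous_intros) auto
    show "w /\<^sub>R 2 \<in> {x. 0 < h x \<and> h x < 1}" using ww by (simp add: h_def)
  qed (auto simp: slab_def)
  ultimately show False
    using ex_less_of_nat_mult[of "c 0" "\<integral>x. f x \<partial>lborel"] by (meson not_le)
qed

lemma integrable_post_flat_prior_imp_inj:
  assumes "integrable lborel (post X Y 0 v)" and "X *v w = 0"
  shows "w = 0"
proof (rule integrable_pos_periodic_imp_period_0[OF assms(1)])
  have "0 < Phi (X $ i \<bullet> \<beta>) ^ Y i * (1 - Phi (X $ i \<bullet> \<beta>)) ^ (1 - Y i)" for i \<beta>
    using Phi_pos Phi_less_1 by simp
  then show "0 < post X Y 0 v \<beta>" for \<beta>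
    by (simp add: post_def prior_def prod_pos)
  have "X $ i \<bullet> w = 0" for i
    using arg_cong[OF assms(2), of "\<lambda>z. z $ i"] by (simp add: matrix_vector_mul_component)
  then show "post X Y 0 v (w + \<beta>) = post X Y 0 v \<beta>" for \<beta>
    by (simp add: post_def prior_def inner_add_right)
qed

section \<open>The probit curvature matrix\<close>

lemma sym_mat_conj: "sym_mat T \<Longrightarrow> sym_mat A \<Longrightarrow> sym_mat (T ** A ** T)"
  by (simp add: sym_mat_def matrix_transpose_mul matrix_mul_assoc)

lemma inner_conj:
  "sym_mat T \<Longrightarrow> x \<bullet> ((T ** A ** T) *v y) = (T *v x) \<bullet> (A *v (T *v (y :: real^'n::finite)))"
  by (simp add: matrix_vector_mul_assoc[symmetric] sym_mat_inner)

lemma inner_transpose_mult: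
  "x \<bullet> (transpose X *v z) = (X *v x) \<bullet> (z :: real^'n::finite)"
  by (metis dot_lmul_matrix inner_commute transpose_transpose vector_transpose_matrix)

lemma inner_gram:
  fixes X :: "real^'p::finite^'n::finite"
  shows "x \<bullet> ((transpose X ** X) *v y) = (\<Sum>i\<in>UNIV. (X $ i \<bullet> x) * (X $ i \<bullet> y))"
proof -
  have "x \<bullet> ((transpose X ** X) *v y) = (X *v x) \<bullet> (X *v y)"
    unfolding matrix_vector_mul_assoc[symmetric] by (rule inner_transpose_mult)
  then show ?thesis by (simp add: inner_vec_def matrix_vector_mul_component)
qed

lemma inner_gram_diag:
  fixes X :: "real^'p::finite^'n::finite"
  shows "x \<bullet> ((transpose X ** diag_mat d ** X) *v y) = (\<Sum>i\<in>UNIV. d i * (X $ i \<bullet> x) * (X $ i \<bullet> y))"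
proof -
  have diag: "(diag_mat d *v z) $ i = d i * z $ i" for z i
  proof -
    have "(diag_mat d *v z) $ i = (\<Sum>j\<in>UNIV. (if i = j then d i else 0) * z $ j)"
      by (simp add: diag_mat_def matrix_vector_mult_def)
    also have "\<dots> = (\<Sum>j\<in>UNIV. if i = j then d i * z $ j else 0)" by (intro sum.cong) auto
    finally show ?thesis by simp
  qed
  have "x \<bullet> ((transpose X ** diag_mat d ** X) *v y) = (X *v x) \<bullet> (diag_mat d *v (X *v y))"
    unfolding matrix_vector_mul_assoc[symmetric] by (rule inner_transpose_mult)
  also have "\<dots> = (\<Sum>i\<in>UNIV. (X *v x) $ i * (diag_mat d *v (X *v y)) $ i)"
    by (simp only: inner_vec_def inner_real_def)
  also have "\<dots> = (\<Sum>i\<in>UNIV. (X $ i \<bullet> x) * (d i * (X $ i \<bullet> y)))"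
    by (simp only: diag, simp only: matrix_vector_mul_component)
  finally show ?thesis by (simp add: mult_ac)
qed

definition Wmat_weight :: "real^'p::finite^'n::finite \<Rightarrow> ('n \<Rightarrow> nat) \<Rightarrow> (real^'p) set \<Rightarrow> 'n \<Rightarrow> real" where
  "Wmat_weight X Y S i =
     (if X $ i \<in> S \<and> Y i = 0 then 1 else 0) + (if X $ i \<in> uminus ` S \<and> Y i = 1 then 1 else 0)"

lemma inner_Wmat:
  fixes X :: "real^'p::finite^'n::finite"
  shows "x \<bullet> (Wmat X Y S *v y) = (\<Sum>i\<in>UNIV. Wmat_weight X Y S i * (X $ i \<bullet> x) * (X $ i \<bullet> y))"
proof -
  have filter: "(\<Sum>i\<in>{i. P i}. f i) = (\<Sum>i\<in>UNIV. if P i then f i else 0)" for P and f :: "'n \<Rightarrow> real"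
    using sum.inter_filter[of UNIV f P] by simp
  have "x \<bullet> (Wmat X Y S *v y) =
     (\<Sum>i\<in>{i. X $ i \<in> S}. (if Y i = 0 then 1 else 0) * (X $ i \<bullet> x) * (X $ i \<bullet> y)) +
     (\<Sum>i\<in>{i. X $ i \<in> uminus ` S}. (if Y i = 1 then 1 else 0) * (X $ i \<bullet> x) * (X $ i \<bullet> y))"
    unfolding Wmat_def
    by (simp add: matrix_vector_mult_add_rdistrib matrix_vector_mult_sum outer_mult_vector
        scaleR_matrix_vector_assoc[symmetric] inner_add_right inner_sum_right mult_ac inner_commute)
  also have "\<dots> = (\<Sum>i\<in>UNIV. (if X $ i \<in> S \<and> Y i = 0 then 1 else 0) * (X $ i \<bullet> x) * (X $ i \<bullet> y)) +
     (\<Sum>i\<in>UNIV. (if X $ i \<in> uminus ` S \<and> Y i = 1 then 1 else 0) * (X $ i \<bullet> x) * (X $ i \<bullet> y))"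
    unfolding filter by (intro arg_cong2[where f = "(+)"] sum.cong) auto
  finally show ?thesis
    by (simp add: Wmat_weight_def sum.distrib[symmetric] algebra_simps)
qed

lemma orthant_sign_inner_nonneg:
  assumes "z \<in> orthant (\<lambda>k. 0 \<le> \<beta> $ k)"
  shows "0 \<le> z \<bullet> \<beta>"
proof -
  have "0 \<le> z $ k * \<beta> $ k" for k
    using assms unfolding orthant_def
    by (cases "0 \<le> \<beta> $ k") (auto intro: mult_nonneg_nonneg mult_nonpos_nonpos elim!: allE[of _ k])
  then show ?thesis by (simp add: inner_vec_def sum_nonneg)
qed

lemma Dmat_entry_bounds:
  fixes X :: "real^'p::finite^'n::finite" and \<beta> :: "real^'p"
  assumes "Y i \<in> {0, 1}"
  defines "d \<equiv> 1 - gfun (X $ i \<bullet> \<beta>) * (if Y i = 1 then 1 else 0)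
                - gfun (- (X $ i \<bullet> \<beta>)) * (if Y i = 0 then 1 else 0)"
  shows "0 \<le> d" and "d \<le> 1 - 2 / pi * Wmat_weight X Y (orthant (\<lambda>k. 0 \<le> \<beta> $ k)) i"
proof -
  let ?S = "orthant (\<lambda>k. 0 \<le> \<beta> $ k)"
  consider "Y i = 0" | "Y i = 1" using assms(1) by auto
  then have "0 \<le> d \<and> d \<le> 1 - 2 / pi * Wmat_weight X Y ?S i"
  proof cases
    case 1
    have "2 / pi \<le> gfun (- (X $ i \<bullet> \<beta>))" if "X $ i \<in> ?S"
      using orthant_sign_inner_nonneg[OF that] by (intro gfun_ge_two_div_pi) simp
    then show ?thesis
      using gfun_nonneg gfun_le_1 by (simp add: d_def Wmat_weight_def 1)
  next
    case 2
    have "2 / pi \<le> gfun (X $ i \<bullet> \<beta>)" if "X $ i \<in> uminus ` ?S"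
      using that orthant_sign_inner_nonneg by (auto intro!: gfun_ge_two_div_pi)
    then show ?thesis
      using gfun_nonneg gfun_le_1 by (simp add: d_def Wmat_weight_def 2)
  qed
  then show "0 \<le> d" "d \<le> 1 - 2 / pi * Wmat_weight X Y ?S i" by auto
qed

lemma gram_Dmat_bounds:
  fixes X :: "real^'p::finite^'n::finite"
  assumes Y01: "\<forall>i. Y i \<in> {0, 1}"
  shows "0 \<le> z \<bullet> ((transpose X ** Dmat X Y \<beta> ** X) *v z)"
    and "z \<bullet> ((transpose X ** Dmat X Y \<beta> ** X) *v z) \<le>
           z \<bullet> ((transpose X ** X) *v z) - 2 / pi * (z \<bullet> (Wmat X Y (orthant (\<lambda>k. 0 \<le> \<beta> $ k)) *v z))"
proof -
  let ?w = "Wmat_weight X Y (orthant (\<lambda>k. 0 \<le> \<beta> $ k))"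
  define d where "d i = 1 - gfun (X $ i \<bullet> \<beta>) * (if Y i = 1 then 1 else 0)
                        - gfun (- (X $ i \<bullet> \<beta>)) * (if Y i = 0 then 1 else 0)" for i
  have D: "Dmat X Y \<beta> = diag_mat d" by (simp add: Dmat_def d_def[abs_def])
  have d: "0 \<le> d i" "d i \<le> 1 - 2 / pi * ?w i" for i
    using Dmat_entry_bounds[of Y i X \<beta>] Y01 by (simp_all add: d_def)
  show "0 \<le> z \<bullet> ((transpose X ** Dmat X Y \<beta> ** X) *v z)"
    unfolding D inner_gram_diag by (intro sum_nonneg) (simp add: d mult.assoc)
  have "z \<bullet> ((transpose X ** Dmat X Y \<beta> ** X) *v z) \<le>
      (\<Sum>i\<in>UNIV. (1 - 2 / pi * ?w i) * (X $ i \<bullet> z) * (X $ i \<bullet> z))"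
    unfolding D inner_gram_diag mult.assoc by (intro sum_mono mult_right_mono d) simp
  also have "\<dots> = z \<bullet> ((transpose X ** X) *v z) - 2 / pi * (z \<bullet> (Wmat X Y (orthant (\<lambda>k. 0 \<le> \<beta> $ k)) *v z))"
    by (simp add: inner_gram inner_Wmat algebra_simps sum_subtractf sum_distrib_left)
  finally show "z \<bullet> ((transpose X ** Dmat X Y \<beta> ** X) *v z) \<le>
      z \<bullet> ((transpose X ** X) *v z) - 2 / pi * (z \<bullet> (Wmat X Y (orthant (\<lambda>k. 0 \<le> \<beta> $ k)) *v z))" .
qed

lemma sym_mat_gram: "sym_mat (transpose X ** (X :: real^'p::finite^'n::finite))"
  by (rule sym_matI) (simp add: inner_gram inner_commute[of _ x for x] mult.commute)

lemma sym_mat_gram_diag: "sym_mat (transpose X ** diag_mat d ** (X :: real^'p::finite^'n::finite))"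
  by (rule sym_matI) (simp add: inner_gram_diag inner_commute[of _ x for x] mult_ac)

lemma sym_mat_Wmat: "sym_mat (Wmat X Y S)"
  by (rule sym_matI) (simp add: inner_Wmat inner_commute[of _ x for x] mult_ac)

lemma sym_mat_gram_Dmat: "sym_mat (transpose X ** Dmat X Y \<beta> ** X)"
  unfolding Dmat_def by (rule sym_mat_gram_diag)

lemma pd_gram_add:
  fixes X :: "real^'p::finite^'n::finite" and Q :: "real^'p^'p"
  assumes symQ: "sym_mat Q" and Q_nonneg: "\<And>w. 0 \<le> w \<bullet> (Q *v w)"
    and Q_pos_on_kernel: "\<And>w. w \<noteq> 0 \<Longrightarrow> X *v w = 0 \<Longrightarrow> 0 < w \<bullet> (Q *v w)"
  shows "pd (transpose X ** X + Q)"
  unfolding pd_def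
proof (intro conjI allI impI)
  show "sym_mat (transpose X ** X + Q)"
    by (rule sym_matI) (simp add: matrix_vector_mult_add_rdistrib inner_add_left inner_add_right
        sym_mat_inner[OF sym_mat_gram] sym_mat_inner[OF symQ])
  fix w :: "real^'p" assume "w \<noteq> 0"
  have "w \<bullet> ((transpose X ** X) *v w) = (X *v w) \<bullet> (X *v w)"
    unfolding matrix_vector_mul_assoc[symmetric] by (rule inner_transpose_mult)
  then have "w \<bullet> ((transpose X ** X + Q) *v w) = (X *v w) \<bullet> (X *v w) + w \<bullet> (Q *v w)"
    by (simp only: matrix_vector_mult_add_rdistrib inner_add_right)
  then show "0 < w \<bullet> ((transpose X ** X + Q) *v w)"
    using Q_nonneg[of w] Q_pos_on_kernel[OF \<open>w \<noteq> 0\<close>]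
    by (cases "X *v w = 0") (auto intro: add_pos_nonneg)
qed

lemma norm_ratio_le_of_conj_norm_le:
  fixes T S N :: "real^'n::finite^'n"
  assumes TS: "T ** S = mat 1" and bound: "\<And>u. norm ((T ** N ** T) *v u) \<le> c * norm u"
  shows "(norm (T *v (N *v \<alpha>)))\<^sup>2 / (norm (S *v \<alpha>))\<^sup>2 \<le> c\<^sup>2"
proof -
  have "T *v (S *v \<alpha>) = \<alpha>" by (simp add: matrix_vector_mul_assoc TS)
  then have "T *v (N *v \<alpha>) = (T ** N ** T) *v (S *v \<alpha>)"
    by (simp add: matrix_vector_mul_assoc[symmetric])
  then have "(norm (T *v (N *v \<alpha>)))\<^sup>2 \<le> c\<^sup>2 * (norm (S *v \<alpha>))\<^sup>2"
    using bound[of "S *v \<alpha>"] by (simp add: power_mono power_mult_distrib[symmetric])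
  then show ?thesis by (cases "S *v \<alpha> = 0") (simp_all add: divide_le_eq)
qed

lemma pd_gram_add_prior:
  fixes X :: "real^'p::finite^'n::finite"
  assumes "pd Q \<or> Q = 0" and "integrable lborel (post X Y Q v)"
  shows "pd (transpose X ** X + Q)"
proof (rule pd_gram_add)
  show "sym_mat Q" using assms(1) by (auto simp: pd_def sym_mat_def transpose_def vec_eq_iff)
  show "0 \<le> w \<bullet> (Q *v w)" for w
    using assms(1) by (cases "w = 0") (auto simp: pd_def less_imp_le)
  show "0 < w \<bullet> (Q *v w)" if "w \<noteq> 0" "X *v w = 0" for w
    using assms that integrable_post_flat_prior_imp_inj[of X Y v w] by (auto simp: pd_def)
qed

lemma conj_gram_Dmat_bounds:
  fixes X :: "real^'p::finite^'n::finite" and T :: "real^'p^'p"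
  assumes Y01: "\<forall>i. Y i \<in> {0, 1}" and symT: "sym_mat T"
  shows "0 \<le> x \<bullet> ((T ** (transpose X ** Dmat X Y \<beta> ** X) ** T) *v x)"
    and "x \<bullet> ((T ** (transpose X ** Dmat X Y \<beta> ** X) ** T) *v x) \<le>
      (lambda_max (T ** (transpose X ** X) ** T)
        - 2 / pi * (MIN s\<in>UNIV. lambda_min (T ** Wmat X Y (orthant s) ** T))) * (x \<bullet> x)"
proof -
  let ?A = "T ** (transpose X ** X) ** T" and ?B = "\<lambda>s. T ** Wmat X Y (orthant s) ** T"
  let ?s = "\<lambda>k. 0 \<le> \<beta> $ k"
  note D = gram_Dmat_bounds[OF Y01, where z = "T *v x" and \<beta> = \<beta> and X = X]
  show "0 \<le> x \<bullet> ((T ** (transpose X ** Dmat X Y \<beta> ** X) ** T) *v x)"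
    using D(1) by (simp add: inner_conj[OF symT])
  have "lambda_min (?B ?s) * (x \<bullet> x) \<le> x \<bullet> (?B ?s *v x)"
    by (rule sym_mat_quadratic_form_bounds(1)[OF sym_mat_conj[OF symT sym_mat_Wmat]])
  moreover have "(MIN s\<in>UNIV. lambda_min (?B s)) \<le> lambda_min (?B ?s)" by simp
  ultimately have "(MIN s\<in>UNIV. lambda_min (?B s)) * (x \<bullet> x) \<le> x \<bullet> (?B ?s *v x)"
    by (meson inner_ge_zero mult_right_mono order_trans)
  then have "2 / pi * ((MIN s\<in>UNIV. lambda_min (?B s)) * (x \<bullet> x)) \<le> 2 / pi * (x \<bullet> (?B ?s *v x))"
    by (rule mult_left_mono) simp
  moreover have "x \<bullet> (?A *v x) \<le> lambda_max ?A * (x \<bullet> x)"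
    by (rule sym_mat_quadratic_form_bounds(2)[OF sym_mat_conj[OF symT sym_mat_gram]])
  ultimately show "x \<bullet> ((T ** (transpose X ** Dmat X Y \<beta> ** X) ** T) *v x) \<le>
      (lambda_max ?A - 2 / pi * (MIN s\<in>UNIV. lambda_min (?B s))) * (x \<bullet> x)"
    using D(2) unfolding inner_conj[OF symT] left_diff_distrib mult.assoc by linarith
qed

theorem proposition8:
  fixes X :: "real^'p::finite^'n::finite"
    and Y :: "'n \<Rightarrow> nat"
    and Q :: "real^'p^'p"
    and v :: "real^'p"
    and Bhat :: "real^'p"
  assumes Y01: "\<forall>i. Y i \<in> {0, 1}"
    and Qcond: "pd Q \<or> Q = 0"
    and proper: "integrable lborel (post X Y Q v)"
    and mode: "\<forall>\<beta>. post X Y Q v \<beta> \<le> post X Y Q v Bhat"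
  defines "\<Sigma> \<equiv> transpose X ** X + Q"
  defines "lam \<equiv> (SUP t\<in>{0<..<1::real}. SUP \<alpha>\<in>{\<alpha>::real^'p. \<alpha> \<noteq> 0}.
                    (norm (mat_isqrt \<Sigma> *v (transpose X ** Dmat X Y (Bhat + t *\<^sub>R \<alpha>) ** X *v \<alpha>)))\<^sup>2
                    / (norm (mat_sqrt \<Sigma> *v \<alpha>))\<^sup>2)"
  shows "sqrt lam \<le> lambda_max (mat_isqrt \<Sigma> ** (transpose X ** X) ** mat_isqrt \<Sigma>)
           - (2 / pi) * (MIN s\<in>(UNIV :: ('p \<Rightarrow> bool) set).
                 lambda_min (mat_isqrt \<Sigma> ** Wmat X Y (orthant s) ** mat_isqrt \<Sigma>))"
proof -
  txt \<open>The bound holds with \<open>Bhat\<close> replaced by any point.\<close>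
  have "pd \<Sigma>" unfolding \<Sigma>_def using Qcond proper by (rule pd_gram_add_prior)
  note T = mat_isqrt[OF this]
  define c where "c = lambda_max (mat_isqrt \<Sigma> ** (transpose X ** X) ** mat_isqrt \<Sigma>)
           - (2 / pi) * (MIN s\<in>(UNIV :: ('p \<Rightarrow> bool) set).
                 lambda_min (mat_isqrt \<Sigma> ** Wmat X Y (orthant s) ** mat_isqrt \<Sigma>))"
  define M where "M \<beta> = mat_isqrt \<Sigma> ** (transpose X ** Dmat X Y \<beta> ** X) ** mat_isqrt \<Sigma>" for \<beta>
  have M: "sym_mat (M \<beta>)" "0 \<le> x \<bullet> (M \<beta> *v x)" "x \<bullet> (M \<beta> *v x) \<le> c * (x \<bullet> x)" for \<beta> x
    unfolding M_def c_def
    by (intro sym_mat_conj T(2) sym_mat_gram_Dmat conj_gram_Dmat_bounds[OF Y01 T(2)])+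
  have "0 \<le> c" using M(2,3) by (rule quadratic_form_bounds_imp_nonneg)
  have "(norm (mat_isqrt \<Sigma> *v (transpose X ** Dmat X Y \<beta> ** X *v \<alpha>)))\<^sup>2
      / (norm (mat_sqrt \<Sigma> *v \<alpha>))\<^sup>2 \<le> c\<^sup>2" for \<beta> \<alpha>
    using sym_mat_norm_le[OF M] by (intro norm_ratio_le_of_conj_norm_le[OF T(1)]) (simp add: M_def)
  then have "lam \<le> c\<^sup>2"
    unfolding lam_def by (intro cSUP_least) (auto intro: exI[of _ "1 / 2"] exI[of _ 1])
  then show ?thesis using real_sqrt_le_mono \<open>0 \<le> c\<close> unfolding c_def by fastforce
qed

end
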